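(* For every $0<\gamma<1/100$ there exists $n_0$ such that for all $n\ge n_0$ the following holds. Suppose $H$ is a $3$-graph of order $n$ with $\delta_2(H)\ge(1/2-\gamma)n$. Let $X,Y$ be any bipartition of $V(H)$ with $|X|,|Y|\ge n/5$. If $H$ is not $3\gamma$-extremal, then $H$ has at least $\gamma^2n^3$ $XXY$-edges and at least $\gamma^2n^3$ $XYY$-edges.
   Context: A $3$-graph is a $3$-uniform hypergraph; $\delta_2(H)$ is the minimum over pairs of distinct vertices of the number of edges containing the pair. An $XXY$-edge is an edge with exactly two vertices in $X$ and one in $Y$; an $XYY$-edge has one vertex in $X$ and two in $Y$. For disjoint $A,B$, $\mathcal B[A,B]$ is the $3$-graph on $A\cup B$ whose edges are all triples with an odd number of vertices in $A$. $H$ $\gamma$-contains $H'$ (same vertex set $V$) if $|E(H')\setminus E(H)|\le\gamma|V|^3$. $H$ on $n$ vertices is $\gamma$-extremal if there is a partition $V(H)=A\cup B$ with $|A|=\lfloor n/2\rfloor$, $|B|=\lceil n/2\rceil$ such that $H$ $\gamma$-contains $\mathcal B[A,B]$. *)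

theory Defs
  imports Complex_Main
begin

definition three_graph :: "'a set \<Rightarrow> 'a set set \<Rightarrow> bool" where
  "three_graph V E \<longleftrightarrow> finite V \<and> (\<forall>e\<in>E. e \<subseteq> V \<and> card e = 3)"

definition codeg :: "'a set set \<Rightarrow> 'a \<Rightarrow> 'a \<Rightarrow> nat" where
  "codeg E x y = card {e\<in>E. x \<in> e \<and> y \<in> e}"

definition min_codeg :: "'a set \<Rightarrow> 'a set set \<Rightarrow> nat" where
  "min_codeg V E = Min {codeg E x y | x y. x \<in> V \<and> y \<in> V \<and> x \<noteq> y}"

definition bip :: "'a set \<Rightarrow> 'a set \<Rightarrow> 'a set set" where
  "bip A B = {e. e \<subseteq> A \<union> B \<and> card e = 3 \<and> odd (card (e \<inter> A))}"

definition gamma_contains :: "real \<Rightarrow> 'a set \<Rightarrow> 'a set set \<Rightarrow> 'a set set \<Rightarrow> bool" where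
  "gamma_contains \<gamma> V E E' \<longleftrightarrow> real (card (E' - E)) \<le> \<gamma> * real (card V) ^ 3"

definition extremal :: "real \<Rightarrow> 'a set \<Rightarrow> 'a set set \<Rightarrow> bool" where
  "extremal \<gamma> V E \<longleftrightarrow> (\<exists>A B. A \<inter> B = {} \<and> A \<union> B = V \<and>
      card A = card V div 2 \<and> card B = card V - card V div 2 \<and>
      gamma_contains \<gamma> V E (bip A B))"

definition num_XXY :: "'a set set \<Rightarrow> 'a set \<Rightarrow> 'a set \<Rightarrow> nat" where
  "num_XXY E X Y = card {e\<in>E. card (e \<inter> X) = 2 \<and> card (e \<inter> Y) = 1}"

end

theory Submission
  imports Defs
begin

text \<open>Count ordered triples of distinct vertices. Every pair inside \<open>X\<close> and every pair across
\<open>X, Y\<close> has codegree at least \<open>(1/2 - \<gamma>)n\<close>; if there are fewer than \<open>\<gamma>\<^sup>2n\<^sup>3\<close> XXY-edges, almost all of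
that codegree must land in \<open>X\<close> (resp. in \<open>Y\<close>). As a pair inside \<open>X\<close> has only \<open>|X| - 2\<close> possible third
vertices in \<open>X\<close>, this forces \<open>|X|, |Y| \<ge> n/2 - O(\<gamma>n)\<close>, and the slack left over bounds the number of
triples of \<open>B[X,Y]\<close> missing from \<open>H\<close> by \<open>\<gamma>n\<^sup>3\<close>. Moving \<open>O(\<gamma>n)\<close> vertices to make the parts exactly
balanced destroys at most another \<open>2\<gamma>n\<^sup>3\<close> triples.\<close>

definition triples :: "'a set \<Rightarrow> 'a set \<Rightarrow> 'a set \<Rightarrow> ('a \<times> 'a \<times> 'a) set" where
  "triples A B C = {(u,w,z). u \<in> A \<and> w \<in> B \<and> z \<in> C \<and> u \<noteq> w \<and> u \<noteq> z \<and> w \<noteq> z}"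

definition edge_triples :: "'a set set \<Rightarrow> 'a set \<Rightarrow> 'a set \<Rightarrow> 'a set \<Rightarrow> ('a \<times> 'a \<times> 'a) set" where
  "edge_triples E A B C = {(u,w,z) \<in> triples A B C. {u,w,z} \<in> E}"

definition nonedge_triples :: "'a set set \<Rightarrow> 'a set \<Rightarrow> 'a set \<Rightarrow> 'a set \<Rightarrow> ('a \<times> 'a \<times> 'a) set" where
  "nonedge_triples E A B C = triples A B C - edge_triples E A B C"

lemma triples_Sigma: "triples A B C = (SIGMA u:A. SIGMA w:B - {u}. C - {u,w})"
  unfolding triples_def by auto

lemma finite_triples: "finite A \<Longrightarrow> finite B \<Longrightarrow> finite C \<Longrightarrow> finite (triples A B C)"
  unfolding triples_Sigma by auto

lemma edge_triples_subset: "edge_triples E A B C \<subseteq> triples A B C"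
  unfolding edge_triples_def by auto

lemma finite_edge_triples:
  "finite A \<Longrightarrow> finite B \<Longrightarrow> finite C \<Longrightarrow> finite (edge_triples E A B C)"
  using edge_triples_subset finite_triples finite_subset by metis

lemma finite_nonedge_triples:
  "finite A \<Longrightarrow> finite B \<Longrightarrow> finite C \<Longrightarrow> finite (nonedge_triples E A B C)"
  unfolding nonedge_triples_def by (simp add: finite_triples)

lemma card_edge_triples:
  assumes "finite A" "finite B" "finite C"
  shows "card (edge_triples E A B C) = (\<Sum>u\<in>A. \<Sum>w\<in>B - {u}. card {z \<in> C - {u,w}. {u,w,z} \<in> E})"
proof -
  have "edge_triples E A B C = (SIGMA u:A. SIGMA w:B - {u}. {z \<in> C - {u,w}. {u,w,z} \<in> E})"
    unfolding edge_triples_def triples_def by auto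
  then show ?thesis using assms by simp
qed

lemma card_edge_nonedge_triples:
  assumes "finite A" "finite B" "finite C"
  shows "card (edge_triples E A B C) + card (nonedge_triples E A B C) = card (triples A B C)"
  using assms edge_triples_subset[of E A B C] unfolding nonedge_triples_def
  by (simp add: card_Diff_subset card_mono finite_triples finite_edge_triples)

lemma card_triples_same:
  assumes "finite A"
  shows "card (triples A A A) = card A * (card A - 1) * (card A - 2)"
proof -
  have "card (triples A A A) = (\<Sum>u\<in>A. \<Sum>w\<in>A - {u}. card (A - {u,w}))"
    unfolding triples_Sigma using assms by simp
  also have "\<dots> = (\<Sum>u\<in>A. \<Sum>w\<in>A - {u}. card A - 2)"
    using assms by (intro sum.cong refl) (auto simp: card_Diff_subset)
  finally show ?thesis using assms by simp
qed

lemma card_triples_disjoint: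
  assumes "finite X" "finite Y" "X \<inter> Y = {}"
  shows "card (triples X Y Y) = card X * card Y * (card Y - 1)"
proof -
  have "card (triples X Y Y) = (\<Sum>u\<in>X. \<Sum>w\<in>Y - {u}. card (Y - {u,w}))"
    unfolding triples_Sigma using assms by simp
  also have "\<dots> = (\<Sum>u\<in>X. \<Sum>w\<in>Y. card Y - 1)"
  proof (rule sum.cong[OF refl])
    fix u assume "u \<in> X"
    then have "Y - {u} = Y" "\<And>w. w \<in> Y \<Longrightarrow> Y - {u,w} = Y - {w}" using assms(3) by auto
    then show "(\<Sum>w\<in>Y - {u}. card (Y - {u,w})) = (\<Sum>w\<in>Y. card Y - 1)" by simp
  qed
  finally show ?thesis by simp
qed

lemma triple_in_3set_eq:
  assumes "card e = 3" "(u,w,z) \<in> triples e e e"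
  shows "{u,w,z} = e"
proof (rule card_subset_eq)
  show "finite e" using assms(1) by (intro card_ge_0_finite) simp
qed (use assms in \<open>auto simp: triples_def\<close>)

definition ordered_triples :: "'a set set \<Rightarrow> ('a \<times> 'a \<times> 'a) set" where
  "ordered_triples F = {(u,w,z). u \<noteq> w \<and> u \<noteq> z \<and> w \<noteq> z \<and> {u,w,z} \<in> F}"

lemma card_ordered_triples:
  assumes "finite F" "\<And>e. e \<in> F \<Longrightarrow> card e = 3"
  shows "card (ordered_triples F) = 6 * card F"
proof -
  have fin: "finite e" if "e \<in> F" for e
    using assms(2)[OF that] by (intro card_ge_0_finite) simp
  have "ordered_triples F = (\<Union>e\<in>F. triples e e e)"
  proof (intro equalityI subsetI)
    fix t assume "t \<in> ordered_triples F"
    then obtain u w z where "t = (u,w,z)" "u \<noteq> w" "u \<noteq> z" "w \<noteq> z" "{u,w,z} \<in> F"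
      unfolding ordered_triples_def by blast
    then show "t \<in> (\<Union>e\<in>F. triples e e e)" unfolding triples_def by blast
  next
    fix t assume "t \<in> (\<Union>e\<in>F. triples e e e)"
    then obtain e where "e \<in> F" "t \<in> triples e e e" by blast
    moreover obtain u w z where "t = (u,w,z)" by (cases t)
    ultimately show "t \<in> ordered_triples F"
      using triple_in_3set_eq[OF assms(2)] by (auto simp: ordered_triples_def triples_def)
  qed
  also have "card \<dots> = (\<Sum>e\<in>F. card (triples e e e))"
  proof (rule card_UN_disjoint)
    show "\<forall>i\<in>F. \<forall>j\<in>F. i \<noteq> j \<longrightarrow> triples i i i \<inter> triples j j j = {}"
    proof (intro ballI impI equals0I)
      fix i j t assume "i \<in> F" "j \<in> F" "i \<noteq> j" "t \<in> triples i i i \<inter> triples j j j"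
      then show False using triple_in_3set_eq[OF assms(2)] by (cases t) (metis IntD1 IntD2)
    qed
  qed (use assms(1) fin finite_triples in auto)
  also have "\<dots> = (\<Sum>e\<in>F. 6)"
    using assms(2) fin by (intro sum.cong) (auto simp: card_triples_same)
  finally show ?thesis by simp
qed

lemma card_nonedge_triples_rotate:
  "card (nonedge_triples E A B C) = card (nonedge_triples E C A B)"
proof -
  let ?rot = "\<lambda>(u,w,z). (z,u,w)"
  have "nonedge_triples E C A B = ?rot ` nonedge_triples E A B C"
  proof (intro equalityI subsetI)
    fix t assume "t \<in> nonedge_triples E C A B"
    then obtain z u w where "t = (z,u,w)" "(u,w,z) \<in> nonedge_triples E A B C"
      by (auto simp: nonedge_triples_def edge_triples_def triples_def insert_commute)
    then show "t \<in> ?rot ` nonedge_triples E A B C" by force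
  qed (auto simp: nonedge_triples_def edge_triples_def triples_def insert_commute)
  moreover have "inj ?rot" by (auto simp: inj_def)
  ultimately show ?thesis by (metis card_image inj_on_subset subset_UNIV)
qed

lemma codeg_eq_card_third_vertices:
  assumes "three_graph V E" "u \<in> V" "w \<in> V" "u \<noteq> w"
  shows "codeg E u w = card {z \<in> V - {u,w}. {u,w,z} \<in> E}"
proof -
  have "{e \<in> E. u \<in> e \<and> w \<in> e} = (\<lambda>z. {u,w,z}) ` {z \<in> V - {u,w}. {u,w,z} \<in> E}"
  proof (intro equalityI subsetI)
    fix e assume e: "e \<in> {e \<in> E. u \<in> e \<and> w \<in> e}"
    then have "card e = 3" "e \<subseteq> V" using assms(1) unfolding three_graph_def by auto
    then have "card (e - {u,w}) = 1" using e assms(4) by (subst card_Diff_subset) auto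
    then obtain z where z: "e - {u,w} = {z}" by (erule card_1_singletonE)
    then have "e = {u,w,z}" using e by auto
    then show "e \<in> (\<lambda>z. {u,w,z}) ` {z \<in> V - {u,w}. {u,w,z} \<in> E}" using z e \<open>e \<subseteq> V\<close> by auto
  qed auto
  moreover have "inj_on (\<lambda>z. {u,w,z}) {z \<in> V - {u,w}. {u,w,z} \<in> E}"
    by (auto simp: inj_on_def insert_commute)
  ultimately show ?thesis unfolding codeg_def by (simp add: card_image)
qed

lemma min_codeg_le_codeg:
  assumes "three_graph V E" "u \<in> V" "w \<in> V" "u \<noteq> w"
  shows "min_codeg V E \<le> codeg E u w"
proof -
  have "{codeg E x y | x y. x \<in> V \<and> y \<in> V \<and> x \<noteq> y} \<subseteq> (\<lambda>(x,y). codeg E x y) ` (V \<times> V)"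
    by auto
  moreover have "finite V" using assms(1) unfolding three_graph_def by simp
  ultimately show ?thesis
    unfolding min_codeg_def using assms by (intro Min_le) (auto intro: finite_surj)
qed

lemma card_edge_triples_ge_min_codeg:
  assumes "three_graph V E" "A \<subseteq> V" "B \<subseteq> V"
  shows "min_codeg V E * (\<Sum>u\<in>A. card (B - {u})) \<le> card (edge_triples E A B V)"
proof -
  have fin: "finite V" "finite A" "finite B"
    using assms finite_subset unfolding three_graph_def by auto
  have "min_codeg V E * (\<Sum>u\<in>A. card (B - {u})) = (\<Sum>u\<in>A. \<Sum>w\<in>B - {u}. min_codeg V E)"
    by (simp add: sum_distrib_left mult.commute)
  also have "\<dots> \<le> (\<Sum>u\<in>A. \<Sum>w\<in>B - {u}. card {z \<in> V - {u,w}. {u,w,z} \<in> E})"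
  proof (intro sum_mono)
    fix u w assume "u \<in> A" "w \<in> B - {u}"
    then have uw: "u \<in> V" "w \<in> V" "u \<noteq> w" using assms by auto
    show "min_codeg V E \<le> card {z \<in> V - {u,w}. {u,w,z} \<in> E}"
      using min_codeg_le_codeg[OF assms(1) uw] codeg_eq_card_third_vertices[OF assms(1) uw] by simp
  qed
  also have "\<dots> = card (edge_triples E A B V)"
    using card_edge_triples[OF fin(2,3,1)] by simp
  finally show ?thesis .
qed

lemma card_edge_triples_Un:
  assumes "finite A" "finite B" "finite C" "finite C'" "C \<inter> C' = {}"
  shows "card (edge_triples E A B (C \<union> C')) = card (edge_triples E A B C) + card (edge_triples E A B C')"
proof -
  have "edge_triples E A B (C \<union> C') = edge_triples E A B C \<union> edge_triples E A B C'"
    "edge_triples E A B C \<inter> edge_triples E A B C' = {}"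
    using assms(5) unfolding edge_triples_def triples_def by auto
  then show ?thesis using assms by (simp add: card_Un_disjoint finite_edge_triples)
qed

lemma card_edge_triples_le_num_XXY:
  assumes "three_graph V E" "X \<inter> Y = {}"
  shows "card (edge_triples E X X Y) \<le> 6 * num_XXY E X Y"
    and "card (edge_triples E X Y X) \<le> 6 * num_XXY E X Y"
proof -
  let ?F = "{e \<in> E. card (e \<inter> X) = 2 \<and> card (e \<inter> Y) = 1}"
  let ?T = "ordered_triples ?F"
  have "finite V" "E \<subseteq> Pow V" and c3: "\<And>e. e \<in> ?F \<Longrightarrow> card e = 3"
    using assms(1) unfolding three_graph_def by auto
  then have "finite E" by (meson finite_Pow_iff finite_subset)
  have card_T: "card ?T = 6 * num_XXY E X Y"
    unfolding num_XXY_def using \<open>finite E\<close> by (intro card_ordered_triples c3) auto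
  have "?T \<subseteq> V \<times> V \<times> V" using \<open>E \<subseteq> Pow V\<close> by (auto simp: ordered_triples_def)
  then have "finite ?T" using \<open>finite V\<close> by (simp add: finite_subset)
  have "edge_triples E X X Y \<subseteq> ?T"
  proof
    fix t assume "t \<in> edge_triples E X X Y"
    then obtain u w z where t: "t = (u,w,z)" "u \<in> X" "w \<in> X" "z \<in> Y" "u \<noteq> w" "{u,w,z} \<in> E"
      unfolding edge_triples_def triples_def by auto
    then have "{u,w,z} \<inter> X = {u,w}" "{u,w,z} \<inter> Y = {z}" using assms(2) by auto
    then show "t \<in> ?T" using t assms(2) by (auto simp: ordered_triples_def)
  qed
  moreover have "edge_triples E X Y X \<subseteq> ?T"
  proof
    fix t assume "t \<in> edge_triples E X Y X"
    then obtain u w z where t: "t = (u,w,z)" "u \<in> X" "w \<in> Y" "z \<in> X" "u \<noteq> z" "{u,w,z} \<in> E"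
      unfolding edge_triples_def triples_def by auto
    then have "{u,w,z} \<inter> X = {u,z}" "{u,w,z} \<inter> Y = {w}" using assms(2) by auto
    then show "t \<in> ?T" using t assms(2) by (auto simp: ordered_triples_def)
  qed
  ultimately show "card (edge_triples E X X Y) \<le> 6 * num_XXY E X Y"
    "card (edge_triples E X Y X) \<le> 6 * num_XXY E X Y"
    using card_mono[OF \<open>finite ?T\<close>] card_T by auto
qed

lemma card_nonedge_triples_XXX:
  assumes "three_graph V E" "X \<inter> Y = {}" "X \<union> Y = V"
  shows "card (nonedge_triples E X X X) + min_codeg V E * (card X * (card X - 1))
         \<le> card X * (card X - 1) * (card X - 2) + 6 * num_XXY E X Y"
proof -
  have fin: "finite X" "finite Y" using assms unfolding three_graph_def by auto
  have "(\<Sum>u\<in>X. card (X - {u})) = card X * (card X - 1)"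
    using fin by (simp add: sum_constant)
  then have "min_codeg V E * (card X * (card X - 1)) \<le> card (edge_triples E X X V)"
    using card_edge_triples_ge_min_codeg[OF assms(1), of X X] assms(3) by auto
  also have "\<dots> = card (edge_triples E X X X) + card (edge_triples E X X Y)"
    using card_edge_triples_Un[OF fin(1,1,1,2) assms(2)] assms(3) by simp
  finally show ?thesis
    using card_edge_triples_le_num_XXY(1)[OF assms(1,2)] card_edge_nonedge_triples[OF fin(1,1,1), of E]
      card_triples_same[OF fin(1)] by linarith
qed

lemma card_nonedge_triples_XYY:
  assumes "three_graph V E" "X \<inter> Y = {}" "X \<union> Y = V"
  shows "card (nonedge_triples E X Y Y) + min_codeg V E * (card X * card Y)
         \<le> card X * card Y * (card Y - 1) + 6 * num_XXY E X Y"
proof -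
  have fin: "finite X" "finite Y" using assms unfolding three_graph_def by auto
  have "(\<Sum>u\<in>X. card (Y - {u})) = card X * card Y"
    using assms(2) by (simp add: disjoint_iff)
  then have "min_codeg V E * (card X * card Y) \<le> card (edge_triples E X Y V)"
    using card_edge_triples_ge_min_codeg[OF assms(1), of X Y] assms(3) by auto
  also have "\<dots> = card (edge_triples E X Y X) + card (edge_triples E X Y Y)"
    using card_edge_triples_Un[OF fin(1,2,1,2) assms(2)] assms(3) by simp
  finally show ?thesis
    using card_edge_triples_le_num_XXY(2)[OF assms(1,2)] card_edge_nonedge_triples[OF fin(1,2,2), of E]
      card_triples_disjoint[OF fin assms(2)] by linarith
qed

lemma card_bip_nonedges_le:
  assumes "finite X" "finite Y" "X \<inter> Y = {}"
  shows "6 * card (bip X Y - E) \<le> card (nonedge_triples E X X X) + 3 * card (nonedge_triples E X Y Y)"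
proof -
  let ?F = "bip X Y - E"
  let ?T = "ordered_triples ?F"
  have "?F \<subseteq> Pow (X \<union> Y)" unfolding bip_def by auto
  then have "finite ?F" using assms(1,2) by (simp add: finite_subset)
  have "?T \<subseteq> nonedge_triples E X X X \<union> nonedge_triples E X Y Y
             \<union> nonedge_triples E Y X Y \<union> nonedge_triples E Y Y X"
  proof
    fix t assume "t \<in> ?T"
    then obtain u w z where t: "t = (u,w,z)" "u \<noteq> w" "u \<noteq> z" "w \<noteq> z" "{u,w,z} \<subseteq> X \<union> Y"
      "odd (card ({u,w,z} \<inter> X))" "{u,w,z} \<notin> E"
      unfolding ordered_triples_def bip_def by auto
    then show "t \<in> nonedge_triples E X X X \<union> nonedge_triples E X Y Y
             \<union> nonedge_triples E Y X Y \<union> nonedge_triples E Y Y X"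
      using assms(3) by (cases "u \<in> X"; cases "w \<in> X"; cases "z \<in> X")
        (auto simp: nonedge_triples_def edge_triples_def triples_def)
  qed
  then have "card ?T \<le> card (nonedge_triples E X X X \<union> nonedge_triples E X Y Y
             \<union> nonedge_triples E Y X Y \<union> nonedge_triples E Y Y X)"
    using assms(1,2) by (intro card_mono) (simp_all add: finite_nonedge_triples)
  also have "\<dots> \<le> card (nonedge_triples E X X X) + card (nonedge_triples E X Y Y)
             + card (nonedge_triples E Y X Y) + card (nonedge_triples E Y Y X)"
    by (meson card_Un_le add_le_mono le_refl order_trans)
  finally have "card ?T \<le> \<dots>" .
  moreover have "card ?T = 6 * card ?F"
    using \<open>finite ?F\<close> by (intro card_ordered_triples) (auto simp: bip_def)
  \<comment> \<open>YXY- and YYX-triples are rotations of XYY-triples, whence the factor 3\<close>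
  ultimately show ?thesis
    using card_nonedge_triples_rotate[of E Y X Y] card_nonedge_triples_rotate[of E Y Y X] by simp
qed

lemma card_3sets_meeting_le:
  assumes "finite V" "D \<subseteq> V"
  shows "2 * card {e. e \<subseteq> V \<and> card e = 3 \<and> e \<inter> D \<noteq> {}} \<le> card D * card V ^ 2"
proof -
  let ?F = "{e. e \<subseteq> V \<and> card e = 3 \<and> e \<inter> D \<noteq> {}}"
  let ?T = "ordered_triples ?F"
  have "?F \<subseteq> Pow V" by auto
  then have "finite ?F" using assms(1) by (simp add: finite_subset)
  then have "6 * card ?F = card ?T" by (intro card_ordered_triples[symmetric]) auto
  also have "\<dots> \<le> card ((D \<times> V \<times> V) \<union> (V \<times> D \<times> V) \<union> (V \<times> V \<times> D))"
    using assms finite_subset by (intro card_mono) (auto simp: ordered_triples_def)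
  also have "\<dots> \<le> card (D \<times> V \<times> V) + card (V \<times> D \<times> V) + card (V \<times> V \<times> D)"
    by (meson card_Un_le add_le_mono le_refl order_trans)
  also have "\<dots> = 3 * (card D * card V ^ 2)"
    by (simp add: card_cartesian_product power2_eq_square)
  finally show ?thesis by simp
qed

lemma card_bip_nonedges_move:
  assumes "finite V" "A \<subseteq> V" "X \<subseteq> V"
  shows "card (bip A (V - A) - E) \<le> card (bip X (V - X) - E)
           + card {e. e \<subseteq> V \<and> card e = 3 \<and> e \<inter> (sym_diff A X) \<noteq> {}}"
proof -
  let ?G = "{e. e \<subseteq> V \<and> card e = 3 \<and> e \<inter> (sym_diff A X) \<noteq> {}}"
  have sub: "bip A (V - A) - E \<subseteq> (bip X (V - X) - E) \<union> ?G"
  proof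
    fix e assume e: "e \<in> bip A (V - A) - E"
    show "e \<in> (bip X (V - X) - E) \<union> ?G"
    proof (cases "e \<inter> (sym_diff A X) = {}")
      case True
      then have "e \<inter> A = e \<inter> X" by auto
      then show ?thesis using e assms(2,3) unfolding bip_def by auto
    next
      case False
      then show ?thesis using e assms(2) unfolding bip_def by auto
    qed
  qed
  have "(bip X (V - X) - E) \<union> ?G \<subseteq> Pow V"
    using assms(3) unfolding bip_def by auto
  then have "finite ((bip X (V - X) - E) \<union> ?G)"
    using assms(1) by (meson finite_Pow_iff finite_subset)
  then have "card (bip A (V - A) - E) \<le> card ((bip X (V - X) - E) \<union> ?G)"
    using sub by (rule card_mono)
  then show ?thesis using card_Un_le order_trans by blast
qed

lemma obtain_nested_subset:
  assumes "finite V" "X \<subseteq> V" "k \<le> card V"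
  obtains A where "A \<subseteq> V" "card A = k" "A \<subseteq> X \<or> X \<subseteq> A"
proof (cases "k \<le> card X")
  case True
  then obtain A where "A \<subseteq> X" "card A = k" using obtain_subset_with_card_n by metis
  then show ?thesis using that assms(2) by blast
next
  case False
  have "finite X" using assms(1,2) by (rule finite_subset[rotated])
  then have "k - card X \<le> card (V - X)" using assms by (simp add: card_Diff_subset)
  then obtain D where D: "D \<subseteq> V - X" "card D = k - card X" using obtain_subset_with_card_n by metis
  then have "card (X \<union> D) = k"
    using False \<open>finite X\<close> assms(1) by (subst card_Un_disjoint) (auto intro: finite_subset)
  then show ?thesis using that[of "X \<union> D"] D assms(2) by blast
qed

lemma extremal_if_close_to_bip:
  assumes "finite V" "X \<subseteq> V"
    and "real (card (bip X (V - X) - E))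
         + \<bar>real (card X) - real (card V div 2)\<bar> * real (card V) ^ 2 / 2 \<le> \<epsilon> * real (card V) ^ 3"
  shows "extremal \<epsilon> V E"
proof -
  obtain A where A: "A \<subseteq> V" "card A = card V div 2" "A \<subseteq> X \<or> X \<subseteq> A"
    using obtain_nested_subset[OF assms(1,2), of "card V div 2"] by auto
  let ?D = "sym_diff A X"
  let ?G = "{e. e \<subseteq> V \<and> card e = 3 \<and> e \<inter> ?D \<noteq> {}}"
  have fin: "finite A" "finite X" using A(1) assms(1,2) finite_subset by auto
  have card_D: "real (card ?D) = \<bar>real (card X) - real (card V div 2)\<bar>"
    using A(3)
  proof
    assume "A \<subseteq> X"
    then have "?D = X - A" by blast
    then show ?thesis using \<open>A \<subseteq> X\<close> fin A(2) card_mono[of X A] by (simp add: card_Diff_subset of_nat_diff)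
  next
    assume "X \<subseteq> A"
    then have "?D = A - X" by blast
    then show ?thesis using \<open>X \<subseteq> A\<close> fin A(2) card_mono[of A X] by (simp add: card_Diff_subset of_nat_diff)
  qed
  have "2 * card ?G \<le> card ?D * card V ^ 2"
    using A(1) assms(2) by (intro card_3sets_meeting_le[OF assms(1)]) auto
  then have "real (2 * card ?G) \<le> real (card ?D * card V ^ 2)"
    by (simp only: of_nat_le_iff)
  then have G: "2 * real (card ?G) \<le> \<bar>real (card X) - real (card V div 2)\<bar> * real (card V) ^ 2"
    using card_D by simp
  have "card (bip A (V - A) - E) \<le> card (bip X (V - X) - E) + card ?G"
    using card_bip_nonedges_move[OF assms(1) A(1) assms(2)] .
  then have "real (card (bip A (V - A) - E)) \<le> \<epsilon> * real (card V) ^ 3"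
    using G assms(3) by linarith
  moreover have "card (V - A) = card V - card V div 2"
    using A(1,2) fin assms(1) by (simp add: card_Diff_subset)
  ultimately show ?thesis
    unfolding extremal_def gamma_contains_def
    using A(1,2) by (intro exI[of _ A] exI[of _ "V - A"]) auto
qed

lemma neg_divide_le_if_le_mult:
  fixes w w0 x c :: real
  assumes "0 < w0" "w0 \<le> w" "0 \<le> c" "- c \<le> w * x"
  shows "- c / w0 \<le> x"
proof (cases "0 \<le> x")
  case True
  have "- c / w0 \<le> 0" using assms(1,3) by simp
  then show ?thesis using True by linarith
next
  case False
  then have "w * x \<le> w0 * x" using assms(2) by (intro mult_right_mono_neg) auto
  then have "- c \<le> x * w0" using assms(4) by (simp add: mult.commute)
  then show ?thesis using assms(1) by (simp add: field_simps)
qed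

text \<open>In the application \<open>a, b\<close> are \<open>|X|, |Y|\<close>, \<open>d\<close> is the minimum codegree, \<open>N\<close> the number of
XXY-edges, and \<open>p, q\<close> the numbers of ordered XXX- and XYY-triples that are not edges.\<close>

lemma part_sizes_near_half:
  fixes g n a b d N p q :: real
  assumes g: "0 < g" "g < 1/100" and n: "30 \<le> n"
    and ab: "a + b = n" "n/5 \<le> a" "n/5 \<le> b"
    and d: "(1/2 - g) * n \<le> d" and N: "N \<le> g^2 * n^3" and pq: "0 \<le> p" "0 \<le> q"
    and XXX: "p + d * (a*(a-1)) \<le> a*(a-1)*(a-2) + 6*N"
    and XYY: "q + d * (a*b) \<le> a*b*(b-1) + 6*N"
  shows "n/2 - 3*g*n \<le> a" "n/2 - 3/2*g*n \<le> b"
proof -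
  have "0 < n" using n by simp
  have gg: "g^2 * n \<le> g * n / 100" using g \<open>0 < n\<close> by (simp add: power2_eq_square)
  have d': "n/2 - g*n \<le> d" using d by (simp add: algebra_simps)
  have "0 \<le> g * n" using g \<open>0 < n\<close> by simp
  have "5/6 * a \<le> a - 1" using ab n by simp
  then have "a * (5/6 * a) \<le> a * (a-1)" using ab n by (intro mult_left_mono) auto
  moreover have "(n/5) * (n/5) \<le> a * a" using ab n by (intro mult_mono) auto
  moreover have "n^2/30 = 5/6 * ((n/5) * (n/5))" "a * (5/6 * a) = 5/6 * (a * a)"
    by (simp_all add: power2_eq_square)
  ultimately have aa: "n^2/30 \<le> a*(a-1)" by linarith
  have "0 \<le> (a - n/5) * (b - n/5)" using ab by (intro mult_nonneg_nonneg) auto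
  moreover have "(a - (a+b)/5) * (b - (a+b)/5) = a*b - 4*(a+b)^2/25"
    by (simp add: field_simps power2_eq_square)
  ultimately have ab2: "4*n^2/25 \<le> a*b" unfolding ab(1) by linarith
  have "- (6*g^2*n^3) \<le> a*(a-1) * (a-2-d)"
    using XXX N pq by (simp add: algebra_simps)
  then have "- (6*g^2*n^3) / (n^2/30) \<le> a-2-d"
    using aa \<open>0 < n\<close> by (intro neg_divide_le_if_le_mult) auto
  moreover have "(6*g^2*n^3) / (n^2/30) = 180 * (g^2 * n)"
    using \<open>0 < n\<close> by (simp add: field_simps power2_eq_square power3_eq_cube)
  ultimately have "a \<ge> d + 2 - 180 * (g^2 * n)" by simp
  then show "n/2 - 3*g*n \<le> a" using d' gg \<open>0 \<le> g * n\<close> by linarith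
  have "- (6*g^2*n^3) \<le> a*b * (b-1-d)"
    using XYY N pq by (simp add: algebra_simps)
  then have "- (6*g^2*n^3) / (4*n^2/25) \<le> b-1-d"
    using ab2 \<open>0 < n\<close> by (intro neg_divide_le_if_le_mult) auto
  moreover have "(6*g^2*n^3) / (4*n^2/25) = 75/2 * (g^2 * n)"
    using \<open>0 < n\<close> by (simp add: field_simps power2_eq_square power3_eq_cube)
  ultimately have "b \<ge> d + 1 - 75/2 * (g^2 * n)" by simp
  then show "n/2 - 3/2*g*n \<le> b" using d' gg \<open>0 \<le> g * n\<close> by linarith
qed

lemma nonedge_count_bound:
  fixes g n a b d N p q :: real
  assumes g: "0 < g" "g < 1/100" and n: "30 \<le> n"
    and ab: "a + b = n" "n/5 \<le> a" "n/5 \<le> b"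
    and d: "(1/2 - g) * n \<le> d" and N: "N \<le> g^2 * n^3" and pq: "0 \<le> p" "0 \<le> q"
    and XXX: "p + d * (a*(a-1)) \<le> a*(a-1)*(a-2) + 6*N"
    and XYY: "q + d * (a*b) \<le> a*b*(b-1) + 6*N"
  shows "p + 3*q \<le> 6*g*n^3"
proof -
  have a: "n/2 - 3*g*n \<le> a" and b: "n/2 - 3/2*g*n \<le> b"
    using part_sizes_near_half[OF assms] by auto
  have "0 < n" using n by simp
  have gn: "0 \<le> g * n" using g \<open>0 < n\<close> by simp
  have d': "n/2 - g*n \<le> d" using d by (simp add: algebra_simps)
  define K where "K = g * n^3"
  have "0 \<le> a*(a-1)" using ab n by simp
  have "a*(a-1) \<le> a*a" "a*a \<le> n*n" using ab n by (auto intro: mult_mono)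
  then have aa: "a*(a-1) \<le> n^2" by (simp add: power2_eq_square)
  have "a - 2 - d \<le> 5/2*g*n" using ab(1) b d' by linarith
  then have "a*(a-1)*(a-2-d) \<le> a*(a-1)*(5/2*g*n)"
    using \<open>0 \<le> a*(a-1)\<close> by (rule mult_left_mono)
  also have "\<dots> \<le> n^2*(5/2*g*n)" using aa gn by (intro mult_right_mono) auto
  also have "\<dots> = 5/2*K" unfolding K_def by (simp add: power2_eq_square power3_eq_cube)
  finally have p: "p \<le> 5/2*K + 6*N" using XXX by (simp add: algebra_simps)
  have "0 \<le> a*b" using ab n by simp
  have "0 \<le> (a - b)^2" by simp
  then have ab4: "a*b \<le> n^2/4"
    unfolding ab(1)[symmetric] by (simp add: power2_eq_square algebra_simps)
  have "b - 1 - d \<le> 4*g*n" using ab(1) a d' by linarith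
  then have "a*b*(b-1-d) \<le> a*b*(4*g*n)"
    using \<open>0 \<le> a*b\<close> by (rule mult_left_mono)
  also have "\<dots> \<le> n^2/4*(4*g*n)" using ab4 gn by (intro mult_right_mono) auto
  also have "\<dots> = K" unfolding K_def by (simp add: power2_eq_square power3_eq_cube)
  finally have q: "q \<le> K + 6*N" using XYY by (simp add: algebra_simps)
  have "g^2 * n^3 \<le> K/100"
    unfolding K_def using g \<open>0 < n\<close> by (simp add: power2_eq_square)
  moreover have "0 \<le> K" unfolding K_def using g \<open>0 < n\<close> by simp
  ultimately show ?thesis using p q N unfolding K_def by linarith
qed

lemma extremal_if_few_XXY:
  fixes \<gamma> :: real
  assumes H: "three_graph V E" "card V = n" "(1/2 - \<gamma>) * real n \<le> real (min_codeg V E)"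
    and XY: "X \<inter> Y = {}" "X \<union> Y = V" "real n / 5 \<le> real (card X)" "real n / 5 \<le> real (card Y)"
    and \<gamma>: "0 < \<gamma>" "\<gamma> < 1/100" and n: "30 \<le> real n" "1 \<le> \<gamma> * real n"
    and few: "real (num_XXY E X Y) \<le> \<gamma>^2 * real n ^ 3"
  shows "extremal (3 * \<gamma>) V E"
proof -
  have fin: "finite V" "finite X" "finite Y" using H(1) XY(2) unfolding three_graph_def by auto
  define a b where "a = real (card X)" and "b = real (card Y)"
  have ab: "a + b = real n"
    using card_Un_disjoint[OF fin(2,3) XY(1)] XY(2) H(2) unfolding a_def b_def by simp
  have "6 \<le> real (card X)" "6 \<le> real (card Y)" using XY(3,4) n(1) by linarith+
  then have casts: "real (card X - 1) = a - 1" "real (card X - 2) = a - 2" "real (card Y - 1) = b - 1"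
    unfolding a_def b_def by (simp_all add: of_nat_diff)
  have "real (card (nonedge_triples E X X X) + min_codeg V E * (card X * (card X - 1)))
        \<le> real (card X * (card X - 1) * (card X - 2) + 6 * num_XXY E X Y)"
    by (rule of_nat_mono[OF card_nonedge_triples_XXX[OF H(1) XY(1,2)]])
  then have XXX: "real (card (nonedge_triples E X X X)) + real (min_codeg V E) * (a*(a-1))
          \<le> a*(a-1)*(a-2) + 6 * real (num_XXY E X Y)"
    unfolding of_nat_add of_nat_mult casts by (simp add: a_def)
  have "real (card (nonedge_triples E X Y Y) + min_codeg V E * (card X * card Y))
        \<le> real (card X * card Y * (card Y - 1) + 6 * num_XXY E X Y)"
    by (rule of_nat_mono[OF card_nonedge_triples_XYY[OF H(1) XY(1,2)]])
  then have XYY: "real (card (nonedge_triples E X Y Y)) + real (min_codeg V E) * (a*b)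
          \<le> a*b*(b-1) + 6 * real (num_XXY E X Y)"
    unfolding of_nat_add of_nat_mult casts by (simp add: a_def b_def)
  note arith_hyps = \<gamma> n(1) ab XY(3,4)[folded a_def b_def] H(3) few of_nat_0_le_iff of_nat_0_le_iff XXX XYY
  have "6 * card (bip X Y - E)
        \<le> card (nonedge_triples E X X X) + 3 * card (nonedge_triples E X Y Y)"
    by (rule card_bip_nonedges_le[OF fin(2,3) XY(1)])
  then have "real (6 * card (bip X Y - E))
        \<le> real (card (nonedge_triples E X X X) + 3 * card (nonedge_triples E X Y Y))"
    by (rule of_nat_mono)
  moreover have "Y = V - X" using XY(1,2) by blast
  ultimately have bip: "real (card (bip X (V - X) - E)) \<le> \<gamma> * real n ^ 3"
    using nonedge_count_bound[OF arith_hyps] by simp_all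
  have "real (2 * (n div 2)) \<le> real n" "real n \<le> real (2 * (n div 2) + 1)"
    by (simp_all only: of_nat_le_iff)
  then have "2 * real (n div 2) \<le> real n" "real n \<le> 2 * real (n div 2) + 1"
    by simp_all
  then have "\<bar>a - real (card V div 2)\<bar> \<le> 3 * \<gamma> * real n + 1/2"
    using part_sizes_near_half[OF arith_hyps] ab H(2) by linarith
  then have "\<bar>a - real (card V div 2)\<bar> * real n ^ 2 / 2 \<le> (3 * \<gamma> * real n + 1/2) * real n ^ 2 / 2"
    by (intro divide_right_mono mult_right_mono) auto
  also have "\<dots> = 3/2 * (\<gamma> * real n ^ 3) + real n ^ 2 / 4"
    by (simp add: algebra_simps power2_eq_square power3_eq_cube)
  finally have "\<bar>a - real (card V div 2)\<bar> * real n ^ 2 / 2 \<le> 3/2 * (\<gamma> * real n ^ 3) + real n ^ 2 / 4" .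
  moreover have "real n ^ 2 \<le> \<gamma> * real n ^ 3"
    using mult_right_mono[OF n(2), of "real n ^ 2"] by (simp add: power2_eq_square power3_eq_cube algebra_simps)
  ultimately have "real (card (bip X (V - X) - E))
      + \<bar>real (card X) - real (card V div 2)\<bar> * real (card V) ^ 2 / 2 \<le> 3 * \<gamma> * real (card V) ^ 3"
    using bip unfolding H(2) a_def by linarith
  then show ?thesis using XY(2) by (intro extremal_if_close_to_bip[OF fin(1)]) auto
qed

theorem lemma3p3:
  fixes \<gamma> :: real
  assumes "0 < \<gamma>" and "\<gamma> < 1/100"
  shows "\<exists>n0::nat. \<forall>n\<ge>n0. \<forall>(V::nat set) E X Y.
     three_graph V E \<and> card V = n \<and>
     real (min_codeg V E) \<ge> (1/2 - \<gamma>) * real n \<and>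
     X \<inter> Y = {} \<and> X \<union> Y = V \<and>
     real (card X) \<ge> real n / 5 \<and> real (card Y) \<ge> real n / 5 \<and>
     \<not> extremal (3 * \<gamma>) V E
     \<longrightarrow> real (num_XXY E X Y) \<ge> \<gamma>^2 * real n ^ 3 \<and>
         real (num_XXY E Y X) \<ge> \<gamma>^2 * real n ^ 3"
proof (intro exI[of _ "max 30 (nat \<lceil>1/\<gamma>\<rceil>)"] allI impI)
  fix n :: nat and V :: "nat set" and E X Y
  assume "max 30 (nat \<lceil>1/\<gamma>\<rceil>) \<le> n"
  then have n: "30 \<le> real n" "1 \<le> \<gamma> * real n"
    using assms(1) by (auto simp: field_simps dest!: le_nat_iff[THEN iffD1])
  assume H: "three_graph V E \<and> card V = n \<and>
     real (min_codeg V E) \<ge> (1/2 - \<gamma>) * real n \<and>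
     X \<inter> Y = {} \<and> X \<union> Y = V \<and>
     real (card X) \<ge> real n / 5 \<and> real (card Y) \<ge> real n / 5 \<and>
     \<not> extremal (3 * \<gamma>) V E"
  have "\<gamma>^2 * real n ^ 3 \<le> real (num_XXY E A B)"
    if "A \<inter> B = {}" "A \<union> B = V" "real n / 5 \<le> real (card A)" "real n / 5 \<le> real (card B)" for A B
  proof (rule ccontr)
    assume "\<not> \<gamma>^2 * real n ^ 3 \<le> real (num_XXY E A B)"
    then have "real (num_XXY E A B) \<le> \<gamma>^2 * real n ^ 3" by simp
    with H that assms n have "extremal (3 * \<gamma>) V E"
      by (intro extremal_if_few_XXY[of V E n \<gamma> A B]) simp_all
    then show False using H by simp
  qed
  then show "\<gamma>^2 * real n ^ 3 \<le> real (num_XXY E X Y) \<and> \<gamma>^2 * real n ^ 3 \<le> real (num_XXY E Y X)"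
    using H by (simp add: Int_commute Un_commute)
qed

end
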